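(* Let $\mathcal{D}\subset\mathbb{R}^n$ be a parameter set, let $X$ and $Y$ be finite-dimensional real Hilbert spaces with norms $\|\cdot\|_X$, $\|\cdot\|_Y$, and for each $\mu\in\mathcal{D}$ let $m(\cdot,\cdot;\mu):X\times X\to\mathbb{R}$, $a(\cdot,\cdot;\mu):X\times X\to\mathbb{R}$, $b(\cdot,\cdot;\mu):X\times Y\to\mathbb{R}$ be bilinear forms such that $m(\cdot,\cdot;\mu)$ is symmetric with $m(v,v;\mu)>0$ for all $0\neq v\in X$, and \[ \gamma_m(\mu)=\sup_{u\in X}\sup_{v\in X}\frac{m(u,v;\mu)}{\|u\|_X\|v\|_X}<\infty,\quad \gamma_a(\mu)=\sup_{u\in X}\sup_{v\in X}\frac{a(u,v;\mu)}{\|u\|_X\|v\|_X}<\infty, \] \[ \alpha_a(\mu)=\inf_{v\in X}\frac{a(v,v;\mu)}{\|v\|_X^2}>0,\qquad \beta(\mu)=\inf_{q\in Y}\sup_{v\in X}\frac{b(v,q;\mu)}{\|q\|_Y\|v\|_X}>0 . \] Let $K\in\mathbb{N}$, $\Delta t>0$, $\mathbb{K}=\{1,\dots,K\}$, and for each $k\in\mathbb{K}$ and $\mu\in\mathcal{D}$ let $f^k(\cdot;\mu)\in X'$, $g^k(\cdot;\mu)\in Y'$. Let the truth solution $u^k(\mu)\in X$, $p^k(\mu)\in Y$, $k\in\mathbb{K}$, be defined by $u^0(\mu)=0$ and, for $k\in\mathbb{K}$, \[ \tfrac{1}{\Delta t}m(u^k(\mu)-u^{k-1}(\mu),v;\mu)+a(u^k(\mu),v;\mu)+b(v,p^k(\mu);\mu)=f^k(v;\mu)\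 \ \forall v\in X,\qquad b(u^k(\mu),q;\mu)=g^k(q;\mu)\ \ \forall q\in Y. \] Let $X_N\subset X$, $Y_N\subset Y$, $N\in\{1,\dots,N_{\max}\}$, be subspaces such that for every $\mu\in\mathcal{D}$ there exist $u^k_N(\mu)\in X_N$, $p^k_N(\mu)\in Y_N$, $k\in\mathbb{K}$, with $u^0_N(\mu)=0$ and, for $k\in\mathbb{K}$, \[ \tfrac{1}{\Delta t}m(u^k_N(\mu)-u^{k-1}_N(\mu),v_N;\mu)+a(u^k_N(\mu),v_N;\mu)+b(v_N,p^k_N(\mu);\mu)=f^k(v_N;\mu)\ \ \forall v_N\in X_N, \] \[ b(u^k_N(\mu),q_N;\mu)=g^k(q_N;\mu)\ \ \forall q_N\in Y_N. \] Define the residuals $r^{1,k}_N(v;\mu)=f^k(v;\mu)-\tfrac{1}{\Delta t}m(u^k_N(\mu)-u^{k-1}_N(\mu),v;\mu)-a(u^k_N(\mu),v;\mu)-b(v,p^k_N(\mu);\mu)$ for $v\in X$ and $r^{2,k}_N(q;\mu)=g^k(q;\mu)-b(u^k_N(\mu),q;\mu)$ for $q\in Y$, and the errors $e^{u,k}_N(\mu)=u^k(\mu)-u^k_N(\mu)$. Let $\mu\in\mathcal{D}$, $N\in\{1,\dots,N_{\max}\}$, $k\in\mathbb{K}$, and let $\alpha_a^{\rm LB}(\mu),\gamma_a^{\rm UB}(\mu),\beta^{\rm LB}(\mu),\gamma_m^{\rm UB}(\mu)$ be positive numbers with $\alpha_a^{\rm LB}(\mu)\le\alpha_a(\mu)$,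 $\gamma_a(\mu)\le\gamma_a^{\rm UB}(\mu)$, $\beta^{\rm LB}(\mu)\le\beta(\mu)$, $\gamma_m(\mu)\le\gamma_m^{\rm UB}(\mu)$. Define \[ \Delta^k_N(\mu)=\Bigg[\Delta t\sum_{j=1}^k\frac{\|r^{1,j}_N(\cdot;\mu)\|^2_{X'}}{\alpha_a^{\rm LB}(\mu)}+\frac{2}{\beta^{\rm LB}(\mu)}\Big(1+\frac{\gamma_a^{\rm UB}(\mu)}{\alpha_a^{\rm LB}(\mu)}\Big)\|r^{1,j}_N(\cdot;\mu)\|_{X'}\|r^{2,j}_N(\cdot;\mu)\|_{Y'} \] \[ +\Big(\frac{\gamma_m^{\rm UB}(\mu)}{\Delta t}+\frac{(\gamma_a^{\rm UB}(\mu))^2}{\alpha_a^{\rm LB}(\mu)}\Big)\frac{\|r^{2,j}_N(\cdot;\mu)\|^2_{Y'}}{(\beta^{\rm LB}(\mu))^2}\Bigg]^{1/2}. \] Then \[ \Big(\|e^{u,k}_N(\mu)\|_\mu^2+\Delta t\sum_{j=1}^k\|e^{u,j}_N(\mu)\|^2_{X,\mu}\Big)^{1/2}\le\Delta^k_N(\mu). \]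
   Context: Here $\|v\|_\mu=\sqrt{m(v,v;\mu)}$ and $\|v\|_{X,\mu}=\sqrt{a(v,v;\mu)}$ for $v\in X$; $X'$, $Y'$ are the dual spaces with dual norms $\|r\|_{X'}=\sup_{0\ne v\in X}r(v)/\|v\|_X$ and $\|r\|_{Y'}=\sup_{0\ne q\in Y}r(q)/\|q\|_Y$. In the sum defining $\Delta^k_N(\mu)$, all three terms are inside the sum over $j$ and multiplied by $\Delta t$. The form $a(\cdot,\cdot;\mu)$ need not be symmetric. *)

theory Defs
  imports "HOL-Analysis.Analysis"
begin

definition cont_const :: "('a::real_normed_vector \<Rightarrow> 'b::real_normed_vector \<Rightarrow> real) \<Rightarrow> real" where
  "cont_const B = (SUP u\<in>-{0}. SUP v\<in>-{0}. B u v / (norm u * norm v))"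

definition coer_const :: "('a::real_normed_vector \<Rightarrow> 'a \<Rightarrow> real) \<Rightarrow> real" where
  "coer_const B = (INF v\<in>-{0}. B v v / (norm v)^2)"

definition infsup_const :: "('a::real_normed_vector \<Rightarrow> 'b::real_normed_vector \<Rightarrow> real) \<Rightarrow> real" where
  "infsup_const B = (INF q\<in>-{0}. SUP v\<in>-{0}. B v q / (norm q * norm v))"

definition dual_norm :: "('a::real_normed_vector \<Rightarrow> real) \<Rightarrow> real" where
  "dual_norm r = (SUP v\<in>-{0}. r v / norm v)"

definition form_norm :: "('a \<Rightarrow> 'a \<Rightarrow> 'p \<Rightarrow> real) \<Rightarrow> 'p \<Rightarrow> 'a \<Rightarrow> real" where
  "form_norm B mu v = sqrt (B v v mu)"

definition res1 :: "('x::real_vector \<Rightarrow> 'x \<Rightarrow> 'p \<Rightarrow> real) \<Rightarrow> ('x \<Rightarrow> 'x \<Rightarrow> 'p \<Rightarrow> real)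
    \<Rightarrow> ('x \<Rightarrow> 'y \<Rightarrow> 'p \<Rightarrow> real) \<Rightarrow> (nat \<Rightarrow> 'x \<Rightarrow> 'p \<Rightarrow> real) \<Rightarrow> real
    \<Rightarrow> (nat \<Rightarrow> 'x) \<Rightarrow> (nat \<Rightarrow> 'y) \<Rightarrow> 'p \<Rightarrow> nat \<Rightarrow> 'x \<Rightarrow> real" where
  "res1 m a b f dt uN pN mu j = (\<lambda>v. f j v mu - (1/dt) * m (uN j - uN (j-1)) v mu
       - a (uN j) v mu - b v (pN j) mu)"

definition res2 :: "('x \<Rightarrow> 'y \<Rightarrow> 'p \<Rightarrow> real) \<Rightarrow> (nat \<Rightarrow> 'y \<Rightarrow> 'p \<Rightarrow> real)
    \<Rightarrow> (nat \<Rightarrow> 'x) \<Rightarrow> 'p \<Rightarrow> nat \<Rightarrow> 'y \<Rightarrow> real" where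
  "res2 b g uN mu j = (\<lambda>q. g j q mu - b (uN j) q mu)"

end

theory Submission
  imports Defs
begin

text \<open>The error pair \<open>(e\<^sup>j, \<epsilon>\<^sup>j)\<close> satisfies the truth equations with the residuals as
  right-hand sides. Testing the first one with \<open>e\<^sup>j - w\<close>, where the lifting \<open>w\<close> of the second
  residual (inf-sup condition) satisfies \<open>b(w,\<cdot>) = b(e\<^sup>j,\<cdot>)\<close>, removes the pressure error.
  Symmetry of \<open>m\<close> turns the time difference into a telescoping difference of \<open>m\<close>-energies, up to
  \<open>m(w,w)\<close>; coercivity and Young's inequality absorb the remaining terms, and summing over the
  time steps gives the bound. Only the truth equations enter, so the estimate holds for any
  discrete pair, in particular for the reduced basis solution.\<close>

lemma bilinear_le_cont_bound:
  fixes B :: "'a::real_normed_vector \<Rightarrow> 'b::real_normed_vector \<Rightarrow> real"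
  assumes bil: "bilinear B"
    and bdd: "bdd_above {B u v / (norm u * norm v) | u v. u \<noteq> 0 \<and> v \<noteq> 0}"
    and C: "cont_const B \<le> C"
  shows "B u v \<le> C * norm u * norm v"
proof (cases "u = 0 \<or> v = 0")
  case True
  then show ?thesis using bilinear_lzero[OF bil] bilinear_rzero[OF bil] by auto
next
  case False
  obtain M where M: "B u' v' / (norm u' * norm v') \<le> M" if "u' \<noteq> 0" "v' \<noteq> 0" for u' v'
    using bdd unfolding bdd_above_def by blast
  have "B u v / (norm u * norm v) \<le> (SUP v'\<in>-{0}. B u v' / (norm u * norm v'))"
    using False M by (intro cSUP_upper bdd_aboveI) auto
  also have "\<dots> \<le> cont_const B"
    unfolding cont_const_def using False M
    by (intro cSUP_upper bdd_aboveI) (auto intro!: cSUP_least)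
  also have "\<dots> \<le> C" by (fact C)
  finally show ?thesis
    using False by (simp add: divide_le_eq mult.assoc)
qed

lemma bilinear_ge_coer_bound:
  fixes B :: "'a::euclidean_space \<Rightarrow> 'a \<Rightarrow> real"
  assumes bil: "bilinear B" and C: "C \<le> coer_const B"
  shows "C * (norm v)\<^sup>2 \<le> B v v"
proof (cases "v = 0")
  case True
  then show ?thesis using bilinear_lzero[OF bil] by auto
next
  case False
  obtain M where M: "\<And>x y. norm (B x y) \<le> M * norm x * norm y"
    using bilinear_bounded[OF bil] by blast
  have "- M \<le> B x x / (norm x)\<^sup>2" if "x \<noteq> 0" for x
    using M[of x x] that by (simp add: le_divide_eq power2_eq_square abs_le_iff)
  then have "coer_const B \<le> B v v / (norm v)\<^sup>2"
    unfolding coer_const_def using False by (intro cINF_lower bdd_belowI2) auto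
  with C have "C \<le> B v v / (norm v)\<^sup>2" by linarith
  then show ?thesis
    using False by (simp add: le_divide_eq)
qed

lemma dual_norm_upper:
  fixes r :: "'a::euclidean_space \<Rightarrow> real"
  assumes lin: "linear r"
  shows "r v \<le> dual_norm r * norm v"
proof (cases "v = 0")
  case True
  then show ?thesis using linear_0[OF lin] by simp
next
  case False
  obtain C where C: "\<And>x. norm (r x) \<le> C * norm x"
    using linear_bounded[OF lin] by blast
  have "r x / norm x \<le> C" if "x \<noteq> 0" for x
    using C[of x] that by (simp add: divide_le_eq)
  then have "r v / norm v \<le> dual_norm r"
    unfolding dual_norm_def using False by (intro cSUP_upper bdd_aboveI2) auto
  then show ?thesis
    using False by (simp add: divide_le_eq)
qed

lemma dual_norm_nonneg:
  fixes r :: "'a::euclidean_space \<Rightarrow> real"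
  assumes lin: "linear r"
  shows "0 \<le> dual_norm r"
proof -
  obtain x :: 'a where x: "x \<noteq> 0"
    using nonempty_Basis nonzero_Basis by blast
  have "r x \<le> dual_norm r * norm x" and "- r x \<le> dual_norm r * norm x"
    using dual_norm_upper[OF lin, of x] dual_norm_upper[OF lin, of "- x"] linear_neg[OF lin]
    by simp_all
  then have "0 \<le> dual_norm r * norm x"
    by linarith
  then show ?thesis
    using x by (simp add: zero_le_mult_iff)
qed

lemma linear_functional_representer:
  fixes r :: "'a::euclidean_space \<Rightarrow> real"
  assumes lin: "linear r"
  shows "(\<Sum>i\<in>Basis. r i *\<^sub>R i) \<bullet> v = r v"
proof -
  have "r v = r (\<Sum>i\<in>Basis. (v \<bullet> i) *\<^sub>R i)"
    by (simp add: euclidean_representation)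
  also have "\<dots> = (\<Sum>i\<in>Basis. (v \<bullet> i) * r i)"
    using lin by (simp add: linear_sum linear_scale)
  finally show ?thesis
    by (simp add: inner_sum_left inner_sum_right mult.commute inner_commute[of _ v])
qed

text \<open>If \<open>z\<close> represents \<open>b(\<cdot>,q)\<close>, the inner supremum in \<open>infsup_const b\<close> at \<open>q\<close> is at
  most \<open>\<parallel>z\<parallel>/\<parallel>q\<parallel>\<close> by Cauchy-Schwarz.\<close>

lemma infsup_const_norm_bound:
  fixes b :: "'a::euclidean_space \<Rightarrow> 'b::euclidean_space \<Rightarrow> real"
  assumes bil: "bilinear b" and beta: "beta \<le> infsup_const b"
    and repr: "\<And>v. b v q = z \<bullet> v"
  shows "beta * norm q \<le> norm z"
proof (cases "q = 0")
  case True
  then show ?thesis by simp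
next
  case False
  define S where "S q' = (SUP v\<in>-{0}. b v q' / (norm q' * norm v))" for q'
  obtain x :: 'a where x: "x \<noteq> 0"
    using nonempty_Basis nonzero_Basis by blast
  have S_nonneg: "0 \<le> S q'" if "q' \<noteq> 0" for q'
  proof -
    obtain C where C: "\<And>x y. norm (b x y) \<le> C * norm x * norm y"
      using bilinear_bounded[OF bil] by blast
    have bdd: "bdd_above ((\<lambda>v. b v q' / (norm q' * norm v)) ` (-{0}))"
      using C that by (intro bdd_aboveI2[where M=C]) (auto simp: divide_le_eq abs_le_iff mult_ac)
    have "b y q' / (norm q' * norm y) \<le> S q'" if "y \<noteq> 0" for y
      unfolding S_def using bdd that by (intro cSUP_upper) auto
    from this[of x] this[of "- x"] show ?thesis
      using x bilinear_lneg[OF bil, of x q'] by (simp add: divide_minus_left)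
  qed
  have "b v q / (norm q * norm v) \<le> norm z / norm q" if "v \<noteq> 0" for v
    using that False norm_cauchy_schwarz[of z v] repr[of v]
    by (simp add: divide_le_eq field_simps)
  then have "S q \<le> norm z / norm q"
    unfolding S_def using x by (intro cSUP_least) auto
  moreover have "infsup_const b \<le> S q"
    unfolding infsup_const_def S_def[symmetric]
    using False S_nonneg by (intro cINF_lower) (auto intro!: bdd_belowI2[where m=0])
  ultimately have "beta \<le> norm z / norm q"
    using beta by linarith
  then show ?thesis
    using False by (simp add: le_divide_eq)
qed

text \<open>With \<open>B\<^sup>*\<close> the representer map of \<open>b\<close>, the operator \<open>B B\<^sup>*\<close> is injective by the
  inf-sup condition, hence surjective in finite dimension; the lifting is \<open>w = B\<^sup>* q\<^sub>0\<close> for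
  \<open>B B\<^sup>* q\<^sub>0\<close> representing \<open>r\<close>, and \<open>\<parallel>w\<parallel>\<^sup>2 = r(q\<^sub>0) \<le> \<parallel>r\<parallel> \<parallel>w\<parallel> / \<beta>\<close>.\<close>

lemma infsup_lifting:
  fixes b :: "'a::euclidean_space \<Rightarrow> 'b::euclidean_space \<Rightarrow> real"
  assumes bil: "bilinear b" and beta: "0 < beta" "beta \<le> infsup_const b"
    and lin: "linear r"
  obtains w where "\<And>q. b w q = r q" and "beta * norm w \<le> dual_norm r"
proof -
  have linl: "linear (\<lambda>v. b v q)" and linr: "linear (\<lambda>q. b v q)" for q v
    using bil by (simp_all add: bilinear_def)
  define Badj where "Badj q = (\<Sum>i\<in>Basis. b i q *\<^sub>R i)" for q
  have Badj_inner: "Badj q \<bullet> v = b v q" for q v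
    unfolding Badj_def using linear_functional_representer[OF linl] .
  have Badj_bound: "beta * norm q \<le> norm (Badj q)" for q
    using infsup_const_norm_bound[OF bil beta(2)] Badj_inner by metis
  have Badj_lin: "linear Badj"
    unfolding Badj_def linear_iff
    by (simp add: bilinear_radd[OF bil] bilinear_rmul[OF bil] scaleR_add_left sum.distrib
        scaleR_sum_right)
  define T where "T q = (\<Sum>i\<in>Basis. b (Badj q) i *\<^sub>R i)" for q
  have T_inner: "T q \<bullet> q' = b (Badj q) q'" for q q'
    unfolding T_def using linear_functional_representer[OF linr] .
  have T_lin: "linear T"
    unfolding T_def linear_iff
    by (simp add: linear_add[OF Badj_lin] linear_scale[OF Badj_lin] bilinear_ladd[OF bil]
        bilinear_lmul[OF bil] scaleR_add_left sum.distrib scaleR_sum_right)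
  have "inj T"
  proof (rule linear_injective_0[OF T_lin, THEN iffD2], intro allI impI)
    fix q
    assume "T q = 0"
    then have "Badj q = 0"
      using T_inner[of q q] Badj_inner[of q "Badj q"] by simp
    then show "q = 0"
      using Badj_bound[of q] beta(1) by (simp add: mult_le_0_iff)
  qed
  then obtain q0 where q0: "T q0 = (\<Sum>i\<in>Basis. r i *\<^sub>R i)"
    using linear_injective_imp_surjective[OF T_lin] by (metis surjE)
  define w where "w = Badj q0"
  have w_lifts: "b w q = r q" for q
    using T_inner[of q0 q] linear_functional_representer[OF lin, of q] q0 w_def by simp
  have "(norm w)\<^sup>2 \<le> dual_norm r * norm q0"
    using Badj_inner[of q0 w] w_lifts dual_norm_upper[OF lin, of q0] w_def
    by (simp add: power2_norm_eq_inner)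
  also have "\<dots> \<le> dual_norm r * (norm w / beta)"
    using Badj_bound[of q0] beta(1) dual_norm_nonneg[OF lin] w_def
    by (intro mult_left_mono) (simp_all add: le_divide_eq mult.commute)
  finally have "beta * norm w * norm w \<le> dual_norm r * norm w"
    using beta(1) by (simp add: power2_eq_square field_simps)
  then have "beta * norm w \<le> dual_norm r"
    using dual_norm_nonneg[OF lin] by (cases "w = 0") simp_all
  with w_lifts that show ?thesis by blast
qed

lemma symmetric_psd_time_difference:
  fixes m :: "'a::real_vector \<Rightarrow> 'a \<Rightarrow> real"
  assumes bil: "bilinear m" and sym: "\<And>x y. m x y = m y x" and psd: "\<And>x. 0 \<le> m x x"
  shows "m E E - m P P - m w w \<le> 2 * m (E - P) (E - w)"
  using psd[of "E - P - w"]
  by (simp add: bilinear_lsub[OF bil] bilinear_rsub[OF bil] sym[of P E] sym[of w E] sym[of w P])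

text \<open>The scalar core of the energy estimate: \<open>W\<close> is the norm of the lifting, \<open>E\<close> the norm of
  the error, \<open>A\<close> its \<open>a\<close>-energy; Young's inequality \<open>2xE \<le> \<alpha> E\<^sup>2 + x\<^sup>2/\<alpha>\<close> is applied with
  \<open>x = R\<^sub>1 + \<gamma>\<^sub>a W\<close>.\<close>

lemma energy_step_arith:
  fixes dt al be ga gm R1 R2 E W A ME MP Mw :: real
  assumes dt: "0 < dt" and al: "0 < al" and be: "0 < be" and ga: "0 \<le> ga" and gm: "0 \<le> gm"
    and R1: "0 \<le> R1" and E: "0 \<le> E" and W: "0 \<le> W"
    and lift: "be * W \<le> R2" and coer: "al * E\<^sup>2 \<le> A" and Mw: "Mw \<le> gm * W\<^sup>2"
    and energy: "ME - MP - Mw + 2 * dt * A \<le> 2 * dt * (R1 * E + R1 * W + ga * E * W)"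
  shows "ME - MP + dt * A \<le> dt * (R1\<^sup>2 / al + 2 / be * (1 + ga / al) * R1 * R2
           + (gm / dt + ga\<^sup>2 / al) * R2\<^sup>2 / be\<^sup>2)"
proof -
  define x where "x = R1 + ga * W"
  have young: "2 * x * E \<le> A + x\<^sup>2 / al"
  proof -
    have "0 \<le> (al * E - x)\<^sup>2 / al" using al by simp
    also have "\<dots> = al * E\<^sup>2 - 2 * x * E + x\<^sup>2 / al"
      using al by (simp add: power2_eq_square field_simps)
    finally show ?thesis using coer by linarith
  qed
  have W_le: "W \<le> R2 / be"
    using lift be by (simp add: le_divide_eq mult.commute)
  have x_le: "x\<^sup>2 \<le> (R1 + ga * R2 / be)\<^sup>2"
    unfolding x_def using R1 ga W mult_left_mono[OF W_le ga] by (intro power_mono) auto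
  have W2_le: "W\<^sup>2 \<le> (R2 / be)\<^sup>2"
    using W W_le by (intro power_mono)
  have "ME - MP + dt * A \<le> gm * W\<^sup>2 + dt * (x\<^sup>2 / al) + 2 * dt * R1 * W"
    using energy Mw mult_left_mono[OF young, of dt] dt unfolding x_def
    by (simp add: algebra_simps)
  also have "\<dots> \<le> gm * (R2 / be)\<^sup>2 + dt * ((R1 + ga * R2 / be)\<^sup>2 / al) + 2 * dt * R1 * (R2 / be)"
    using W_le W2_le x_le dt al gm R1
    by (intro add_mono mult_left_mono divide_right_mono) auto
  also have "\<dots> = dt * (R1\<^sup>2 / al + 2 / be * (1 + ga / al) * R1 * R2
           + (gm / dt + ga\<^sup>2 / al) * R2\<^sup>2 / be\<^sup>2)"
    using dt al be by (simp add: power2_eq_square field_simps)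
  finally show ?thesis .
qed

lemma error_energy_step:
  fixes m a :: "'x::euclidean_space \<Rightarrow> 'x \<Rightarrow> real" and b :: "'x \<Rightarrow> 'y::euclidean_space \<Rightarrow> real"
    and r1 :: "'x \<Rightarrow> real" and r2 :: "'y \<Rightarrow> real"
  assumes bil: "bilinear m" "bilinear a" "bilinear b"
    and m_sym: "\<And>x y. m x y = m y x" and m_psd: "\<And>x. 0 \<le> m x x"
    and m_bound: "\<And>x. m x x \<le> gm * (norm x)\<^sup>2"
    and a_bound: "\<And>x y. a x y \<le> ga * norm x * norm y"
    and a_coer: "\<And>x. al * (norm x)\<^sup>2 \<le> a x x"
    and dt: "0 < dt" and al: "0 < al" and be: "0 < be" "be \<le> infsup_const b"
    and ga: "0 \<le> ga" and gm: "0 \<le> gm"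
    and r1: "\<And>v. r1 v = (1/dt) * m (E - P) v + a E v + b v \<epsilon>"
    and r2: "\<And>q. r2 q = b E q"
  shows "m E E - m P P + dt * a E E \<le> dt * ((dual_norm r1)\<^sup>2 / al
           + 2 / be * (1 + ga / al) * dual_norm r1 * dual_norm r2
           + (gm / dt + ga\<^sup>2 / al) * (dual_norm r2)\<^sup>2 / be\<^sup>2)"
proof -
  have lin1: "linear r1"
    unfolding linear_iff r1
    by (simp add: bilinear_radd[OF bil(1)] bilinear_radd[OF bil(2)] bilinear_ladd[OF bil(3)]
        bilinear_rmul[OF bil(1)] bilinear_rmul[OF bil(2)] bilinear_lmul[OF bil(3)] algebra_simps)
  have lin2: "linear r2"
    unfolding linear_iff r2 by (simp add: bilinear_radd[OF bil(3)] bilinear_rmul[OF bil(3)])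
  obtain w where w: "\<And>q. b w q = r2 q" and w_norm: "be * norm w \<le> dual_norm r2"
    using infsup_lifting[OF bil(3) be lin2] by blast
  have tested: "dt * r1 (E - w) = m (E - P) (E - w) + dt * (a E E - a E w)"
    using r1[of "E - w"] w r2 dt
    by (simp add: bilinear_lsub[OF bil(3)] bilinear_rsub[OF bil(2)] field_simps)
  have r1_bound: "r1 (E - w) \<le> dual_norm r1 * norm E + dual_norm r1 * norm w"
    using dual_norm_upper[OF lin1, of E] dual_norm_upper[OF lin1, of "- w"]
      linear_diff[OF lin1, of E w] linear_neg[OF lin1, of w]
    by simp
  have "dt * r1 (E - w) \<le> dt * (dual_norm r1 * norm E + dual_norm r1 * norm w)"
    and "dt * a E w \<le> dt * (ga * norm E * norm w)"
    using r1_bound a_bound[of E w] dt by simp_all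
  with tested symmetric_psd_time_difference[OF bil(1) m_sym m_psd, of E P w]
  have "m E E - m P P - m w w + 2 * dt * a E E
      \<le> 2 * dt * (dual_norm r1 * norm E + dual_norm r1 * norm w + ga * norm E * norm w)"
    by (simp add: algebra_simps)
  then show ?thesis
    by (rule energy_step_arith[OF dt al be(1) ga gm dual_norm_nonneg[OF lin1] norm_ge_zero
          norm_ge_zero w_norm a_coer m_bound])
qed

lemma telescoped_energy_bound:
  fixes M A T :: "nat \<Rightarrow> real"
  assumes M0: "M 0 = 0"
    and step: "\<And>j. j \<in> {1..k} \<Longrightarrow> M j - M (j - 1) + dt * A j \<le> dt * T j"
  shows "M k + dt * (\<Sum>j=1..k. A j) \<le> dt * (\<Sum>j=1..k. T j)"
proof -
  have "(\<Sum>j=1..k. M j - M (j - 1) + dt * A j) \<le> (\<Sum>j=1..k. dt * T j)"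
    using step by (rule sum_mono)
  moreover have "(\<Sum>j=1..k. M j - M (j - 1)) = M k"
    using sum_telescope''[of 0 k M] M0 by simp
  ultimately show ?thesis
    by (simp add: sum.distrib sum_distrib_left)
qed

lemma res1_error_equation:
  assumes bm: "bilinear (\<lambda>u v. m u v \<mu>)" and ba: "bilinear (\<lambda>u v. a u v \<mu>)"
    and bb: "bilinear (\<lambda>v q. b v q \<mu>)"
    and truth: "(1/dt) * m (u j - u (j - 1)) v \<mu> + a (u j) v \<mu> + b v (p j) \<mu> = f j v \<mu>"
  shows "res1 m a b f dt uN pN \<mu> j v = (1/dt) * m ((u j - uN j) - (u (j - 1) - uN (j - 1))) v \<mu>
           + a (u j - uN j) v \<mu> + b v (p j - pN j) \<mu>"
  using truth unfolding res1_def
  by (simp add: bilinear_lsub[OF bm] bilinear_ladd[OF bm] bilinear_lsub[OF ba]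
      bilinear_rsub[OF bb] algebra_simps diff_divide_distrib add_divide_distrib)

lemma res2_error_equation:
  assumes bb: "bilinear (\<lambda>v q. b v q \<mu>)" and truth: "b (u j) q \<mu> = g j q \<mu>"
  shows "res2 b g uN \<mu> j q = b (u j - uN j) q \<mu>"
  using truth unfolding res2_def by (simp add: bilinear_lsub[OF bb])

theorem proposition2p1:
  fixes D :: "(real^'n) set"
    and m a :: "'x::euclidean_space \<Rightarrow> 'x \<Rightarrow> real^'n \<Rightarrow> real"
    and b :: "'x \<Rightarrow> 'y::euclidean_space \<Rightarrow> real^'n \<Rightarrow> real"
    and K :: nat and dt :: real
    and f :: "nat \<Rightarrow> 'x \<Rightarrow> real^'n \<Rightarrow> real"
    and g :: "nat \<Rightarrow> 'y \<Rightarrow> real^'n \<Rightarrow> real"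
    and u :: "real^'n \<Rightarrow> nat \<Rightarrow> 'x" and p :: "real^'n \<Rightarrow> nat \<Rightarrow> 'y"
    and Nmax :: nat and XN :: "nat \<Rightarrow> 'x set" and YN :: "nat \<Rightarrow> 'y set"
    and uN :: "nat \<Rightarrow> real^'n \<Rightarrow> nat \<Rightarrow> 'x" and pN :: "nat \<Rightarrow> real^'n \<Rightarrow> nat \<Rightarrow> 'y"
    and \<mu> :: "real^'n" and N k :: nat
    and alphaLB gammaaUB betaLB gammamUB :: real
  assumes bil_m: "\<forall>\<mu>\<in>D. bilinear (\<lambda>u v. m u v \<mu>)"
    and bil_a: "\<forall>\<mu>\<in>D. bilinear (\<lambda>u v. a u v \<mu>)"
    and bil_b: "\<forall>\<mu>\<in>D. bilinear (\<lambda>v q. b v q \<mu>)"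
    and sym_m: "\<forall>\<mu>\<in>D. \<forall>u v. m u v \<mu> = m v u \<mu>"
    and pos_m: "\<forall>\<mu>\<in>D. \<forall>v. v \<noteq> 0 \<longrightarrow> m v v \<mu> > 0"
    and fin_m: "\<forall>\<mu>\<in>D. bdd_above {m u v \<mu> / (norm u * norm v) | u v. u \<noteq> 0 \<and> v \<noteq> 0}"
    and fin_a: "\<forall>\<mu>\<in>D. bdd_above {a u v \<mu> / (norm u * norm v) | u v. u \<noteq> 0 \<and> v \<noteq> 0}"
    and coer_a: "\<forall>\<mu>\<in>D. coer_const (\<lambda>u v. a u v \<mu>) > 0"
    and infsup_b: "\<forall>\<mu>\<in>D. infsup_const (\<lambda>v q. b v q \<mu>) > 0"
    and dt_pos: "dt > 0"
    and f_lin: "\<forall>\<mu>\<in>D. \<forall>j\<in>{1..K}. linear (\<lambda>v. f j v \<mu>)"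
    and g_lin: "\<forall>\<mu>\<in>D. \<forall>j\<in>{1..K}. linear (\<lambda>q. g j q \<mu>)"
    and u0: "\<forall>\<mu>\<in>D. u \<mu> 0 = 0"
    and u_eq1: "\<forall>\<mu>\<in>D. \<forall>j\<in>{1..K}. \<forall>v.
       (1/dt) * m (u \<mu> j - u \<mu> (j-1)) v \<mu> + a (u \<mu> j) v \<mu> + b v (p \<mu> j) \<mu> = f j v \<mu>"
    and u_eq2: "\<forall>\<mu>\<in>D. \<forall>j\<in>{1..K}. \<forall>q. b (u \<mu> j) q \<mu> = g j q \<mu>"
    and XN_sub: "\<forall>N'\<in>{1..Nmax}. subspace (XN N')"
    and YN_sub: "\<forall>N'\<in>{1..Nmax}. subspace (YN N')"
    and uN_mem: "\<forall>N'\<in>{1..Nmax}. \<forall>\<mu>\<in>D. \<forall>j\<in>{1..K}. uN N' \<mu> j \<in> XN N' \<and> pN N' \<mu> j \<in> YN N'"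
    and uN0: "\<forall>N'\<in>{1..Nmax}. \<forall>\<mu>\<in>D. uN N' \<mu> 0 = 0"
    and uN_eq1: "\<forall>N'\<in>{1..Nmax}. \<forall>\<mu>\<in>D. \<forall>j\<in>{1..K}. \<forall>v\<in>XN N'.
       (1/dt) * m (uN N' \<mu> j - uN N' \<mu> (j-1)) v \<mu> + a (uN N' \<mu> j) v \<mu> + b v (pN N' \<mu> j) \<mu>
         = f j v \<mu>"
    and uN_eq2: "\<forall>N'\<in>{1..Nmax}. \<forall>\<mu>\<in>D. \<forall>j\<in>{1..K}. \<forall>q\<in>YN N'. b (uN N' \<mu> j) q \<mu> = g j q \<mu>"
    and mu_D: "\<mu> \<in> D"
    and N_range: "N \<in> {1..Nmax}"
    and k_range: "k \<in> {1..K}"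
    and pos_LB: "alphaLB > 0" "gammaaUB > 0" "betaLB > 0" "gammamUB > 0"
    and alphaLB_le: "alphaLB \<le> coer_const (\<lambda>u v. a u v \<mu>)"
    and gammaaUB_ge: "cont_const (\<lambda>u v. a u v \<mu>) \<le> gammaaUB"
    and betaLB_le: "betaLB \<le> infsup_const (\<lambda>v q. b v q \<mu>)"
    and gammamUB_ge: "cont_const (\<lambda>u v. m u v \<mu>) \<le> gammamUB"
  shows "sqrt ((form_norm m \<mu> (u \<mu> k - uN N \<mu> k))^2
            + dt * (\<Sum>j=1..k. (form_norm a \<mu> (u \<mu> j - uN N \<mu> j))^2))
         \<le> sqrt (dt * (\<Sum>j=1..k.
              (dual_norm (res1 m a b f dt (uN N \<mu>) (pN N \<mu>) \<mu> j))^2 / alphaLB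
            + 2 / betaLB * (1 + gammaaUB / alphaLB)
                * dual_norm (res1 m a b f dt (uN N \<mu>) (pN N \<mu>) \<mu> j)
                * dual_norm (res2 b g (uN N \<mu>) \<mu> j)
            + (gammamUB / dt + gammaaUB^2 / alphaLB)
                * (dual_norm (res2 b g (uN N \<mu>) \<mu> j))^2 / betaLB^2))"
proof -
  have bm: "bilinear (\<lambda>u v. m u v \<mu>)" and ba: "bilinear (\<lambda>u v. a u v \<mu>)"
    and bb: "bilinear (\<lambda>v q. b v q \<mu>)"
    using bil_m bil_a bil_b mu_D by blast+
  have m_psd: "0 \<le> m v v \<mu>" for v
    using pos_m mu_D bilinear_lzero[OF bm] by (cases "v = 0") (auto intro: less_imp_le)
  have m_bound: "m v v \<mu> \<le> gammamUB * (norm v)\<^sup>2" for v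
    using bilinear_le_cont_bound[OF bm fin_m[rule_format, OF mu_D] gammamUB_ge, of v v]
    by (simp add: power2_eq_square mult.assoc)
  have a_bound: "a v w \<mu> \<le> gammaaUB * norm v * norm w" for v w
    by (rule bilinear_le_cont_bound[OF ba fin_a[rule_format, OF mu_D] gammaaUB_ge])
  have a_coer: "alphaLB * (norm v)\<^sup>2 \<le> a v v \<mu>" for v
    using bilinear_ge_coer_bound[OF ba alphaLB_le] by simp
  define e where "e j = u \<mu> j - uN N \<mu> j" for j
  define T where "T j = (dual_norm (res1 m a b f dt (uN N \<mu>) (pN N \<mu>) \<mu> j))\<^sup>2 / alphaLB
      + 2 / betaLB * (1 + gammaaUB / alphaLB) * dual_norm (res1 m a b f dt (uN N \<mu>) (pN N \<mu>) \<mu> j)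
          * dual_norm (res2 b g (uN N \<mu>) \<mu> j)
      + (gammamUB / dt + gammaaUB\<^sup>2 / alphaLB) * (dual_norm (res2 b g (uN N \<mu>) \<mu> j))\<^sup>2 / betaLB\<^sup>2"
    for j
  have res1_err: "res1 m a b f dt (uN N \<mu>) (pN N \<mu>) \<mu> j v
      = (1/dt) * m (e j - e (j - 1)) v \<mu> + a (e j) v \<mu> + b v (p \<mu> j - pN N \<mu> j) \<mu>"
    if "j \<in> {1..K}" for j v
    unfolding e_def
    by (rule res1_error_equation[where u="u \<mu>" and p="p \<mu>"]) (use bm ba bb u_eq1 mu_D that in auto)
  have res2_err: "res2 b g (uN N \<mu>) \<mu> j q = b (e j) q \<mu>" if "j \<in> {1..K}" for j q
    unfolding e_def
    by (rule res2_error_equation[where u="u \<mu>"]) (use bb u_eq2 mu_D that in auto)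
  have "m (e j) (e j) \<mu> - m (e (j - 1)) (e (j - 1)) \<mu> + dt * a (e j) (e j) \<mu> \<le> dt * T j"
    if "j \<in> {1..k}" for j
  proof -
    have jK: "j \<in> {1..K}" using that k_range by auto
    show ?thesis
      unfolding T_def
      by (rule error_energy_step[OF bm ba bb sym_m[rule_format, OF mu_D] m_psd m_bound a_bound
            a_coer dt_pos pos_LB(1) pos_LB(3) betaLB_le less_imp_le[OF pos_LB(2)]
            less_imp_le[OF pos_LB(4)] res1_err[OF jK] res2_err[OF jK]])
  qed
  moreover have "e 0 = 0"
    unfolding e_def using u0 uN0 mu_D N_range by auto
  ultimately have "m (e k) (e k) \<mu> + dt * (\<Sum>j=1..k. a (e j) (e j) \<mu>) \<le> dt * (\<Sum>j=1..k. T j)"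
    by (intro telescoped_energy_bound) (simp_all add: bilinear_lzero[OF bm])
  then show ?thesis
    using m_psd order_trans[OF mult_nonneg_nonneg a_coer] pos_LB(1)
    unfolding form_norm_def e_def T_def by (simp add: real_sqrt_le_iff)
qed

end
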